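(* Let $(\mathcal{C},I,Z,X,Y)$ be admissible with $Y$ strongly fibrant. Let $c$ be an internal object of $I$ and let $J$ be the full subcategory of $I$ on all objects other than $c$. Then $\varphi\in L_I(X,Y)$ lies in $\ker(p^I_J)$ if and only if both of the following hold: (a) $\varphi_f=0$ for every non-identity morphism $f$ of $I$ whose source and target are both different from $c$; (b) for every pair of indecomposable morphisms $d\xrightarrow{g}c\xrightarrow{f}b$ in $I$, $$Y(f)\circ\varphi_g+\varphi_f\circ X(g)=0.$$
   Context: Strongly directed category: a small category $I$ which (i) has no non-identity endomorphisms; (ii) has a nonempty set of weakly initial objects (no incoming non-identity maps) and a nonempty set of weakly final objects (no outgoing non-identity maps); (iii) has finite Hom-sets; and (iv) is connected. An object is internal if it is neither weakly initial nor weakly final. A morphism is indecomposable if it is non-identity and not a composite of two non-identity morphisms. Admissible: $\mathcal{C}$ is a simplicial model category, $I$ is strongly directed, $Z\in\mathcal{C}^I$ is Reedy fibrant, and $X,Y\in\mathcal{C}^I/Z$ with $X$ cofibrant (projective structure) and $Y$ a fibrant abelian group object. Strongly fibrant (here $\mathcal{C}=s\mathcal{A}$ for a $\mathfrak{G}$-sketchable $\mathcal{A}$): for every object $c$, the canonical map $$Y_c\to Z_c\times_{\lim_{c/I}Z}\lim_{c/I}Y$$ is a fibration, where $c/I$ denotes the category of non-identity maps out of $c$. For non-identity $f:a\to b$, $M_f:=\mathrm{Map}_{\mathcal{C}/Z_b}(X_a,Y_b)$. For $\varphi\in\prod_fM_f$ and a chain $f_\bullet=(f_1,\dots,f_k)$,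 $$S_{f_\bullet}(\varphi)=\sum_{i=1}^kY(f_k\circ\cdots\circ f_{i+1})\circ\varphi_{f_i}\circ X(f_{i-1}\circ\cdots\circ f_1).$$ $L_K(X,Y)\subseteq\prod_{f\in K}M_f$ is the set of $\varphi$ with $\varphi_{f_k\circ\cdots\circ f_1}=S_{f_\bullet}(\varphi)$ for all chains in $K$. For full $J\subseteq I$, $p^I_J(\varphi)=(\varphi_f)_{f\in J}$. *)

theory Defs
  imports "HOL-Library.FuncSet"
begin

record ('o, 'm) cat =
  Ob   :: "'o set"
  Mor  :: "'m set"
  Dom  :: "'m \<Rightarrow> 'o"
  Cod  :: "'m \<Rightarrow> 'o"
  Idm  :: "'o \<Rightarrow> 'm"
  Comp :: "'m \<Rightarrow> 'm \<Rightarrow> 'm"   (* Comp C g f = g \<circ> f, meaningful when Cod f = Dom g *)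

definition is_category :: "('o, 'm) cat \<Rightarrow> bool" where
  "is_category C \<longleftrightarrow>
     (\<forall>f\<in>Mor C. Dom C f \<in> Ob C \<and> Cod C f \<in> Ob C) \<and>
     (\<forall>a\<in>Ob C. Idm C a \<in> Mor C \<and> Dom C (Idm C a) = a \<and> Cod C (Idm C a) = a) \<and>
     (\<forall>f\<in>Mor C. \<forall>g\<in>Mor C. Cod C f = Dom C g \<longrightarrow>
        Comp C g f \<in> Mor C \<and> Dom C (Comp C g f) = Dom C f \<and> Cod C (Comp C g f) = Cod C g) \<and>
     (\<forall>f\<in>Mor C. Comp C f (Idm C (Dom C f)) = f \<and> Comp C (Idm C (Cod C f)) f = f) \<and>
     (\<forall>f\<in>Mor C. \<forall>g\<in>Mor C. \<forall>h\<in>Mor C. Cod C f = Dom C g \<longrightarrow> Cod C g = Dom C h \<longrightarrow>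
        Comp C h (Comp C g f) = Comp C (Comp C h g) f)"

definition nonid :: "('o, 'm) cat \<Rightarrow> 'm \<Rightarrow> bool" where
  "nonid C f \<longleftrightarrow> f \<in> Mor C \<and> f \<noteq> Idm C (Dom C f)"

definition indecomposable :: "('o, 'm) cat \<Rightarrow> 'm \<Rightarrow> bool" where
  "indecomposable C f \<longleftrightarrow> nonid C f \<and>
     \<not> (\<exists>g h. nonid C g \<and> nonid C h \<and> Cod C g = Dom C h \<and> f = Comp C h g)"

definition hom :: "('o, 'm) cat \<Rightarrow> 'o \<Rightarrow> 'o \<Rightarrow> 'm set" where
  "hom C a b = {f \<in> Mor C. Dom C f = a \<and> Cod C f = b}"

definition weakly_initial :: "('o, 'm) cat \<Rightarrow> 'o \<Rightarrow> bool" where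
  "weakly_initial C a \<longleftrightarrow> a \<in> Ob C \<and> (\<forall>f. nonid C f \<longrightarrow> Cod C f \<noteq> a)"

definition weakly_final :: "('o, 'm) cat \<Rightarrow> 'o \<Rightarrow> bool" where
  "weakly_final C a \<longleftrightarrow> a \<in> Ob C \<and> (\<forall>f. nonid C f \<longrightarrow> Dom C f \<noteq> a)"

definition internal :: "('o, 'm) cat \<Rightarrow> 'o \<Rightarrow> bool" where
  "internal C c \<longleftrightarrow> c \<in> Ob C \<and> \<not> weakly_initial C c \<and> \<not> weakly_final C c"

definition connected_cat :: "('o, 'm) cat \<Rightarrow> bool" where
  "connected_cat C \<longleftrightarrow> Ob C \<noteq> {} \<and>
     (let E = {(Dom C f, Cod C f) | f. f \<in> Mor C} in
      \<forall>a\<in>Ob C. \<forall>b\<in>Ob C. (a, b) \<in> (E \<union> E\<inverse>)\<^sup>*)"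

definition strongly_directed :: "('o, 'm) cat \<Rightarrow> bool" where
  "strongly_directed C \<longleftrightarrow> is_category C \<and>
     (\<forall>f\<in>Mor C. Dom C f = Cod C f \<longrightarrow> f = Idm C (Dom C f)) \<and>
     (\<exists>a. weakly_initial C a) \<and> (\<exists>a. weakly_final C a) \<and>
     (\<forall>a\<in>Ob C. \<forall>b\<in>Ob C. finite (hom C a b)) \<and>
     connected_cat C"

section \<open>Abstract coefficient data M_f = Map_{C/Z_b}(X_a, Y_b)\<close>

text \<open>
  M f : the abelian group M_f (a subgroup of an ambient abelian group type).
  postY h f : the map M_f \<rightarrow> M_{h\<circ>f}, \<psi> \<mapsto> Y(h) \<circ> \<psi>   (Cod f = Dom h).
  preX k f  : the map M_f \<rightarrow> M_{f\<circ>k}, \<psi> \<mapsto> \<psi> \<circ> X(k)   (Cod k = Dom f).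
\<close>
definition coeff_system ::
  "('o, 'm) cat \<Rightarrow> ('m \<Rightarrow> 'v::ab_group_add set) \<Rightarrow> ('m \<Rightarrow> 'm \<Rightarrow> 'v \<Rightarrow> 'v) \<Rightarrow> ('m \<Rightarrow> 'm \<Rightarrow> 'v \<Rightarrow> 'v) \<Rightarrow> bool"
where
  "coeff_system C M postY preX \<longleftrightarrow>
     (\<forall>f\<in>Mor C. 0 \<in> M f \<and> (\<forall>v\<in>M f. \<forall>w\<in>M f. v + w \<in> M f) \<and> (\<forall>v\<in>M f. - v \<in> M f)) \<and>
     (\<forall>f\<in>Mor C. \<forall>h\<in>Mor C. Cod C f = Dom C h \<longrightarrow>
        (\<forall>v\<in>M f. postY h f v \<in> M (Comp C h f)) \<and>
        (\<forall>v\<in>M f. \<forall>w\<in>M f. postY h f (v + w) = postY h f v + postY h f w)) \<and>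
     (\<forall>f\<in>Mor C. \<forall>k\<in>Mor C. Cod C k = Dom C f \<longrightarrow>
        (\<forall>v\<in>M f. preX k f v \<in> M (Comp C f k)) \<and>
        (\<forall>v\<in>M f. \<forall>w\<in>M f. preX k f (v + w) = preX k f v + preX k f w)) \<and>
     (\<forall>f\<in>Mor C. \<forall>v\<in>M f. postY (Idm C (Cod C f)) f v = v \<and> preX (Idm C (Dom C f)) f v = v) \<and>
     (\<forall>f\<in>Mor C. \<forall>h\<in>Mor C. \<forall>h'\<in>Mor C. Cod C f = Dom C h \<longrightarrow> Cod C h = Dom C h' \<longrightarrow>
        (\<forall>v\<in>M f. postY (Comp C h' h) f v = postY h' (Comp C h f) (postY h f v))) \<and>
     (\<forall>f\<in>Mor C. \<forall>k\<in>Mor C. \<forall>k'\<in>Mor C. Cod C k = Dom C f \<longrightarrow> Cod C k' = Dom C k \<longrightarrow>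
        (\<forall>v\<in>M f. preX (Comp C k k') f v = preX k' (Comp C f k) (preX k f v))) \<and>
     (\<forall>f\<in>Mor C. \<forall>h\<in>Mor C. \<forall>k\<in>Mor C. Cod C f = Dom C h \<longrightarrow> Cod C k = Dom C f \<longrightarrow>
        (\<forall>v\<in>M f. postY h (Comp C f k) (preX k f v) = preX k (Comp C h f) (postY h f v)))"

definition comps :: "('o, 'm) cat \<Rightarrow> 'o \<Rightarrow> 'm list \<Rightarrow> 'm" where
  "comps C d fs = foldl (\<lambda>acc f. Comp C f acc) (Idm C d) fs"

definition chain :: "('o, 'm) cat \<Rightarrow> 'm list \<Rightarrow> bool" where
  "chain C fs \<longleftrightarrow> fs \<noteq> [] \<and> (\<forall>i<length fs. nonid C (fs ! i)) \<and>
     (\<forall>i. Suc i < length fs \<longrightarrow> Cod C (fs ! i) = Dom C (fs ! Suc i))"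

text \<open>S_{f_\<bullet>}(\<phi>) = \<Sum>_i Y(f_k\<circ>...\<circ>f_{i+1}) \<circ> \<phi>_{f_i} \<circ> X(f_{i-1}\<circ>...\<circ>f_1) (0-indexed).\<close>
definition S_chain :: "('o, 'm) cat \<Rightarrow> ('m \<Rightarrow> 'm \<Rightarrow> 'v \<Rightarrow> 'v) \<Rightarrow> ('m \<Rightarrow> 'm \<Rightarrow> 'v \<Rightarrow> 'v)
    \<Rightarrow> 'm list \<Rightarrow> ('m \<Rightarrow> 'v::ab_group_add) \<Rightarrow> 'v" where
  "S_chain C postY preX fs \<phi> =
     (\<Sum>i<length fs.
        (let g = comps C (Dom C (fs ! 0)) (take i fs);
             h = comps C (Cod C (fs ! i)) (drop (Suc i) fs)
         in postY h (Comp C (fs ! i) g) (preX g (fs ! i) (\<phi> (fs ! i)))))"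

definition prodM :: "('o, 'm) cat \<Rightarrow> ('m \<Rightarrow> 'v set) \<Rightarrow> 'm set \<Rightarrow> ('m \<Rightarrow> 'v) set" where
  "prodM C M K = (\<Pi>\<^sub>E f\<in>{f\<in>K. nonid C f}. M f)"

definition L_set :: "('o, 'm) cat \<Rightarrow> ('m \<Rightarrow> 'v::ab_group_add set) \<Rightarrow> ('m \<Rightarrow> 'm \<Rightarrow> 'v \<Rightarrow> 'v)
    \<Rightarrow> ('m \<Rightarrow> 'm \<Rightarrow> 'v \<Rightarrow> 'v) \<Rightarrow> 'm set \<Rightarrow> ('m \<Rightarrow> 'v) set" where
  "L_set C M postY preX K = {\<phi> \<in> prodM C M K.
     \<forall>fs. chain C fs \<and> set fs \<subseteq> K \<and> nonid C (comps C (Dom C (fs ! 0)) fs) \<longrightarrow>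
        \<phi> (comps C (Dom C (fs ! 0)) fs) = S_chain C postY preX fs \<phi>}"

definition full_mor :: "('o, 'm) cat \<Rightarrow> 'o set \<Rightarrow> 'm set" where
  "full_mor C S = {f \<in> Mor C. Dom C f \<in> S \<and> Cod C f \<in> S}"

definition proj :: "('o, 'm) cat \<Rightarrow> 'm set \<Rightarrow> ('m \<Rightarrow> 'v) \<Rightarrow> ('m \<Rightarrow> 'v)" where
  "proj C KJ \<phi> = restrict \<phi> {f\<in>KJ. nonid C f}"

definition ker_proj :: "('o, 'm) cat \<Rightarrow> ('m \<Rightarrow> 'v::ab_group_add set) \<Rightarrow> ('m \<Rightarrow> 'm \<Rightarrow> 'v \<Rightarrow> 'v)
    \<Rightarrow> ('m \<Rightarrow> 'm \<Rightarrow> 'v \<Rightarrow> 'v) \<Rightarrow> 'm set \<Rightarrow> ('m \<Rightarrow> 'v) set" where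
  "ker_proj C M postY preX KJ =
     {\<phi> \<in> L_set C M postY preX (Mor C). proj C KJ \<phi> = proj C KJ (\<lambda>_. 0)}"

end

theory Submission
  imports Defs
begin

(*
  By definition, phi lies in the kernel of p^I_J iff phi vanishes on every
  non-identity map of J, i.e. on every non-identity map avoiding c; this is
  condition (a).  Condition (b) is then automatic, and in fact holds for every
  composable pair d --g--> c --f--> b of non-identity maps:
    - if f o g is not an identity, the L-relation for the chain [g, f] says
      phi(f o g) = Y(f) phi_g + phi_f X(g), and phi(f o g) = 0 by (a), since
      d, b differ from c (a strongly directed category has no non-identity
      endomorphisms);
    - if f o g = id_d, the L-relation for the chain [g, f, g] with composite g
      shows that Y(g) applied to Y(f) phi_g + phi_f X(g) vanishes, and applying
      Y(f) recovers that element, so it is 0.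
  The file first records the axioms of categories and coefficient systems in
  usable form, computes S on chains of length two and three, derives the two
  relations above, and concludes.
*)

lemma category_axioms:
  assumes "is_category C"
  shows cat_dom_cod: "\<And>f. f\<in>Mor C \<Longrightarrow> Dom C f \<in> Ob C \<and> Cod C f \<in> Ob C"
    and cat_id: "\<And>a. a\<in>Ob C \<Longrightarrow> Idm C a \<in> Mor C \<and> Dom C (Idm C a) = a \<and> Cod C (Idm C a) = a"
    and cat_comp: "\<And>f g. f\<in>Mor C \<Longrightarrow> g\<in>Mor C \<Longrightarrow> Cod C f = Dom C g \<Longrightarrow>
        Comp C g f \<in> Mor C \<and> Dom C (Comp C g f) = Dom C f \<and> Cod C (Comp C g f) = Cod C g"
    and cat_unit: "\<And>f. f\<in>Mor C \<Longrightarrow> Comp C f (Idm C (Dom C f)) = f \<and> Comp C (Idm C (Cod C f)) f = f"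
  using assms unfolding is_category_def by blast+

lemma coeff_system_axioms:
  assumes "coeff_system C M postY preX"
  shows cs_zero: "\<And>f. f\<in>Mor C \<Longrightarrow> 0 \<in> M f"
    and cs_add: "\<And>f v w. f\<in>Mor C \<Longrightarrow> v\<in>M f \<Longrightarrow> w \<in> M f \<Longrightarrow> v + w \<in> M f"
    and cs_postY: "\<And>f h v. f\<in>Mor C \<Longrightarrow> h\<in>Mor C \<Longrightarrow> Cod C f = Dom C h \<Longrightarrow> v\<in>M f \<Longrightarrow>
        postY h f v \<in> M (Comp C h f)"
    and cs_postY_add: "\<And>f h v w. f\<in>Mor C \<Longrightarrow> h\<in>Mor C \<Longrightarrow> Cod C f = Dom C h \<Longrightarrow> v\<in>M f \<Longrightarrow> w\<in>M f \<Longrightarrow>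
        postY h f (v + w) = postY h f v + postY h f w"
    and cs_preX: "\<And>f k v. f\<in>Mor C \<Longrightarrow> k\<in>Mor C \<Longrightarrow> Cod C k = Dom C f \<Longrightarrow> v\<in>M f \<Longrightarrow>
        preX k f v \<in> M (Comp C f k)"
    and cs_postY_id: "\<And>f v. f\<in>Mor C \<Longrightarrow> v\<in>M f \<Longrightarrow> postY (Idm C (Cod C f)) f v = v"
    and cs_preX_id: "\<And>f v. f\<in>Mor C \<Longrightarrow> v\<in>M f \<Longrightarrow> preX (Idm C (Dom C f)) f v = v"
    and cs_postY_comp: "\<And>f h h' v. f\<in>Mor C \<Longrightarrow> h\<in>Mor C \<Longrightarrow> h'\<in>Mor C \<Longrightarrow>
        Cod C f = Dom C h \<Longrightarrow> Cod C h = Dom C h' \<Longrightarrow> v\<in>M f \<Longrightarrow>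
        postY (Comp C h' h) f v = postY h' (Comp C h f) (postY h f v)"
  using assms unfolding coeff_system_def by (auto simp: Ball_def)

lemma postY_zero:
  assumes cs: "coeff_system C M postY preX" and f: "f \<in> Mor C" and h: "h \<in> Mor C"
    and fh: "Cod C f = Dom C h"
  shows "postY h f 0 = (0::'v::ab_group_add)"
proof -
  have "0 \<in> M f" using cs_zero[OF cs f] .
  then have "postY h f (0 + 0) = postY h f 0 + postY h f 0"
    using cs_postY_add[OF cs f h fh] by blast
  then show ?thesis by simp
qed

lemma ker_proj_iff_vanishing:
  assumes L: "\<phi> \<in> L_set C M postY preX (Mor C)"
  shows "\<phi> \<in> ker_proj C M postY preX (full_mor C S) \<longleftrightarrow>
           (\<forall>f. nonid C f \<and> Dom C f \<in> S \<and> Cod C f \<in> S \<longrightarrow> \<phi> f = 0)"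
proof -
  have "proj C (full_mor C S) \<phi> = proj C (full_mor C S) (\<lambda>_. 0) \<longleftrightarrow>
      (\<forall>f\<in>{f\<in>full_mor C S. nonid C f}. \<phi> f = 0)"
    unfolding proj_def by (metis (mono_tags, lifting) restrict_ext restrict_apply')
  also have "\<dots> \<longleftrightarrow> (\<forall>f. nonid C f \<and> Dom C f \<in> S \<and> Cod C f \<in> S \<longrightarrow> \<phi> f = 0)"
    unfolding full_mor_def nonid_def by auto
  finally show ?thesis unfolding ker_proj_def using L by blast
qed

lemma S_chain_two:
  assumes cat: "is_category C" and cs: "coeff_system C M postY preX"
    and g: "g \<in> Mor C" and f: "f \<in> Mor C" and gf: "Cod C g = Dom C f"
    and \<phi>g: "\<phi> g \<in> M g" and \<phi>f: "\<phi> f \<in> M f"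
  shows "S_chain C postY preX [g, f] \<phi> = postY f g (\<phi> g) + preX g f (\<phi> f)"
proof -
  have fg: "Comp C f g \<in> Mor C" "Cod C (Comp C f g) = Cod C f"
    using cat_comp[OF cat g f gf] by auto
  have "preX (Idm C (Dom C g)) g (\<phi> g) = \<phi> g"
    using cs_preX_id[OF cs g \<phi>g] .
  moreover have "postY (Idm C (Cod C f)) (Comp C f g) (preX g f (\<phi> f)) = preX g f (\<phi> f)"
    using cs_postY_id[OF cs fg(1) cs_preX[OF cs f g gf \<phi>f]] fg(2) by simp
  ultimately show ?thesis
    using cat_unit[OF cat g] cat_unit[OF cat f] gf
    by (simp add: S_chain_def comps_def numeral_2_eq_2 lessThan_Suc Let_def add.commute)
qed

lemma S_chain_three:
  assumes cat: "is_category C" and cs: "coeff_system C M postY preX"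
    and g: "g \<in> Mor C" and f: "f \<in> Mor C" and h: "h \<in> Mor C"
    and gf: "Cod C g = Dom C f" and fh: "Cod C f = Dom C h"
    and \<phi>g: "\<phi> g \<in> M g" and \<phi>h: "\<phi> h \<in> M h"
  shows "S_chain C postY preX [g, f, h] \<phi> =
    postY (Comp C h f) g (\<phi> g) + postY h (Comp C f g) (preX g f (\<phi> f))
      + preX (Comp C f g) h (\<phi> h)"
proof -
  have fg: "Comp C f g \<in> Mor C" "Dom C (Comp C f g) = Dom C g" "Cod C (Comp C f g) = Dom C h"
    using cat_comp[OF cat g f gf] fh by auto
  have hfg: "Comp C h (Comp C f g) \<in> Mor C" "Cod C (Comp C h (Comp C f g)) = Cod C h"
    using cat_comp[OF cat fg(1) h fg(3)] by auto
  have "preX (Idm C (Dom C g)) g (\<phi> g) = \<phi> g"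
    using cs_preX_id[OF cs g \<phi>g] .
  moreover have "postY (Idm C (Cod C h)) (Comp C h (Comp C f g)) (preX (Comp C f g) h (\<phi> h))
      = preX (Comp C f g) h (\<phi> h)"
    using cs_postY_id[OF cs hfg(1) cs_preX[OF cs h fg(1) fg(3) \<phi>h]] hfg(2) by simp
  ultimately show ?thesis
    using cat_unit[OF cat g] cat_unit[OF cat f] cat_unit[OF cat h] gf fh
    by (simp add: S_chain_def comps_def numeral_3_eq_3 lessThan_Suc Let_def add_ac)
qed

context
  fixes C :: "('o, 'm) cat" and M :: "'m \<Rightarrow> 'v::ab_group_add set"
    and postY preX :: "'m \<Rightarrow> 'm \<Rightarrow> 'v \<Rightarrow> 'v" and \<phi> :: "'m \<Rightarrow> 'v"
  assumes cat: "is_category C" and cs: "coeff_system C M postY preX"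
    and L: "\<phi> \<in> L_set C M postY preX (Mor C)"
begin

lemma L_component: "nonid C f \<Longrightarrow> \<phi> f \<in> M f"
  using L unfolding L_set_def prodM_def by (auto simp: PiE_iff nonid_def)

lemma L_chain_relation:
  "chain C fs \<Longrightarrow> set fs \<subseteq> Mor C \<Longrightarrow> nonid C (comps C (Dom C (fs ! 0)) fs) \<Longrightarrow>
     \<phi> (comps C (Dom C (fs ! 0)) fs) = S_chain C postY preX fs \<phi>"
  using L unfolding L_set_def by blast

lemma L_composite_nonid:
  assumes ng: "nonid C g" and nf: "nonid C f" and gf: "Cod C g = Dom C f"
    and nfg: "nonid C (Comp C f g)"
  shows "\<phi> (Comp C f g) = postY f g (\<phi> g) + preX g f (\<phi> f)"
proof -
  have g: "g \<in> Mor C" and f: "f \<in> Mor C" using ng nf by (auto simp: nonid_def)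
  have "chain C [g, f]" using ng nf gf by (auto simp: chain_def less_Suc_eq)
  moreover have "comps C (Dom C ([g, f] ! 0)) [g, f] = Comp C f g"
    using cat_unit[OF cat g] by (simp add: comps_def)
  ultimately have "\<phi> (Comp C f g) = S_chain C postY preX [g, f] \<phi>"
    using L_chain_relation nfg g f by fastforce
  then show ?thesis
    using S_chain_two[OF cat cs g f gf L_component[OF ng] L_component[OF nf]] by simp
qed

text \<open>If f o g is an identity, the two-term sum vanishes (chain [g, f, g], whose
  composite is g): Y(g) kills it, and Y(f) o Y(g) = Y(f o g) is the identity.\<close>
lemma L_composite_id:
  assumes ng: "nonid C g" and nf: "nonid C f" and gf: "Cod C g = Dom C f"
    and fg_id: "Comp C f g = Idm C (Dom C g)"
  shows "postY f g (\<phi> g) + preX g f (\<phi> f) = 0"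
proof -
  define d where "d = Dom C g"
  define Z where "Z = postY f g (\<phi> g) + preX g f (\<phi> f)"
  have g: "g \<in> Mor C" and f: "f \<in> Mor C" using ng nf by (auto simp: nonid_def)
  have \<phi>g: "\<phi> g \<in> M g" and \<phi>f: "\<phi> f \<in> M f" using L_component ng nf by auto
  have d: "Idm C d \<in> Mor C" "Dom C (Idm C d) = d" "Cod C (Idm C d) = d"
    using cat_id[OF cat] cat_dom_cod[OF cat g] d_def by auto
  have fd: "Cod C f = d"
    using cat_comp[OF cat g f gf] fg_id d d_def by metis
  then have fg: "Cod C f = Dom C g" using d_def by simp
  have gd: "Comp C g (Idm C d) = g" using cat_unit[OF cat g] d_def by simp
  have Y\<phi>g: "postY f g (\<phi> g) \<in> M (Idm C d)" and \<phi>X: "preX g f (\<phi> f) \<in> M (Idm C d)"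
    using cs_postY[OF cs g f gf \<phi>g] cs_preX[OF cs f g gf \<phi>f] fg_id d_def by auto
  have Z: "Z \<in> M (Idm C d)" using cs_add[OF cs d(1) Y\<phi>g \<phi>X] Z_def by simp
  have "chain C [g, f, g]" using ng nf gf fd d_def
    by (auto simp: chain_def less_Suc_eq nth_Cons')
  moreover have "comps C (Dom C ([g, f, g] ! 0)) [g, f, g] = g"
    using gd fg_id cat_unit[OF cat g] d_def by (simp add: comps_def)
  ultimately have "\<phi> g = S_chain C postY preX [g, f, g] \<phi>"
    using L_chain_relation ng g f by fastforce
  also have "\<dots> = postY (Comp C g f) g (\<phi> g) + postY g (Idm C d) (preX g f (\<phi> f))
      + preX (Idm C d) g (\<phi> g)"
    using S_chain_three[where \<phi>=\<phi>, OF cat cs g f g gf fg \<phi>g \<phi>g] fg_id fd d_def by simp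
  also have "postY (Comp C g f) g (\<phi> g) = postY g (Idm C d) (postY f g (\<phi> g))"
    using cs_postY_comp[OF cs g f g gf _ \<phi>g] fd fg_id d_def by simp
  also have "preX (Idm C d) g (\<phi> g) = \<phi> g"
    using cs_preX_id[OF cs g \<phi>g] d_def by simp
  finally have "postY g (Idm C d) Z = 0"
    using cs_postY_add[OF cs d(1) g _ Y\<phi>g \<phi>X] d Z_def d_def by (simp add: add.assoc)
  moreover have "Z = postY (Idm C d) (Idm C d) Z" using cs_postY_id[OF cs d(1) Z] d by simp
  moreover have "postY (Idm C d) (Idm C d) Z = postY f g (postY g (Idm C d) Z)"
    using cs_postY_comp[OF cs d(1) g f _ _ Z] d d_def gf fg_id gd by simp
  ultimately show ?thesis using postY_zero[OF cs g f gf] Z_def by simp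
qed

lemma vanishing_implies_compatibility:
  assumes endo: "\<forall>f\<in>Mor C. Dom C f = Cod C f \<longrightarrow> f = Idm C (Dom C f)"
    and vanish: "\<forall>f. nonid C f \<and> Dom C f \<noteq> c \<and> Cod C f \<noteq> c \<longrightarrow> \<phi> f = 0"
    and ng: "nonid C g" and nf: "nonid C f" and gc: "Cod C g = c" and fc: "Dom C f = c"
  shows "postY f g (\<phi> g) + preX g f (\<phi> f) = 0"
proof (cases "nonid C (Comp C f g)")
  case True
  have g: "g \<in> Mor C" and f: "f \<in> Mor C" using ng nf by (auto simp: nonid_def)
  have "Dom C g \<noteq> c" and "Cod C f \<noteq> c"
    using endo g f ng nf gc fc by (auto simp: nonid_def)
  then have "\<phi> (Comp C f g) = 0"
    using vanish True cat_comp[OF cat g f] gc fc by auto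
  then show ?thesis using L_composite_nonid[OF ng nf _ True] gc fc by simp
next
  case False
  then have "Comp C f g = Idm C (Dom C g)"
    using ng nf cat_comp[OF cat] gc fc by (auto simp: nonid_def)
  then show ?thesis using L_composite_id[OF ng nf] gc fc by simp
qed

end

theorem lemma8p1:
  fixes C :: "('o, 'm) cat"
    and M :: "'m \<Rightarrow> 'v::ab_group_add set"
    and postY preX :: "'m \<Rightarrow> 'm \<Rightarrow> 'v \<Rightarrow> 'v"
    and c :: 'o
    and \<phi> :: "'m \<Rightarrow> 'v"
  assumes "strongly_directed C"
    and "coeff_system C M postY preX"
    and "internal C c"
    and "\<phi> \<in> L_set C M postY preX (Mor C)"
  shows "\<phi> \<in> ker_proj C M postY preX (full_mor C (Ob C - {c})) \<longleftrightarrow>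
           (\<forall>f. nonid C f \<and> Dom C f \<noteq> c \<and> Cod C f \<noteq> c \<longrightarrow> \<phi> f = 0) \<and>
           (\<forall>g f. indecomposable C g \<and> indecomposable C f \<and> Cod C g = c \<and> Dom C f = c \<longrightarrow>
               postY f g (\<phi> g) + preX g f (\<phi> f) = 0)"
proof -
  have cat: "is_category C" and endo: "\<forall>f\<in>Mor C. Dom C f = Cod C f \<longrightarrow> f = Idm C (Dom C f)"
    using assms(1) unfolding strongly_directed_def by auto
  have ker_iff_a: "\<phi> \<in> ker_proj C M postY preX (full_mor C (Ob C - {c})) \<longleftrightarrow>
      (\<forall>f. nonid C f \<and> Dom C f \<noteq> c \<and> Cod C f \<noteq> c \<longrightarrow> \<phi> f = 0)"
    using ker_proj_iff_vanishing[OF assms(4), of "Ob C - {c}"] cat_dom_cod[OF cat]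
    by (auto simp: nonid_def)
  have a_implies_b: "\<forall>g f. indecomposable C g \<and> indecomposable C f \<and> Cod C g = c \<and> Dom C f = c
      \<longrightarrow> postY f g (\<phi> g) + preX g f (\<phi> f) = 0"
    if "\<forall>f. nonid C f \<and> Dom C f \<noteq> c \<and> Cod C f \<noteq> c \<longrightarrow> \<phi> f = 0"
    using vanishing_implies_compatibility[OF cat assms(2,4) endo that]
    by (auto simp: indecomposable_def)
  show ?thesis using ker_iff_a a_implies_b by blast
qed

end
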